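(* Let $(X,r)$ be a finite solution of the YBE. Suppose that for some prime divisor $p$ of $|\mathcal G(X,r)|$, the group $\mathcal G(X,r)$ has an abelian normal Sylow $p$-subgroup. Then $(X,r)$ is retractable, i.e. there exist distinct $x,y\in X$ with $\sigma_x=\sigma_y$.
   Context: A solution of the Yang–Baxter equation (YBE) is a pair $(X,r)$, where $X$ is a non-empty set and $r\colon X\times X\to X\times X$, written $r(x,y)=(\sigma_x(y),\gamma_y(x))$, satisfies: $r^2=\mathrm{id}$; all maps $\sigma_x,\gamma_y\colon X\to X$ are bijections; and $r_{12}r_{23}r_{12}=r_{23}r_{12}r_{23}$ as maps $X^3\to X^3$, where $r_{12}=r\times\mathrm{id}_X$ and $r_{23}=\mathrm{id}_X\times r$. The permutation group of $(X,r)$ is $\mathcal G(X,r)=\langle \sigma_x : x\in X\rangle\le \mathrm{Sym}_X$ (a group under composition). *)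

theory Defs
  imports "HOL-Algebra.Bij" "HOL-Algebra.Generated_Groups" "HOL-Algebra.Coset" "HOL-Computational_Algebra.Primes"
begin

definition ybe_sigma :: "('a \<times> 'a \<Rightarrow> 'a \<times> 'a) \<Rightarrow> 'a \<Rightarrow> 'a \<Rightarrow> 'a" where
  "ybe_sigma r x y = fst (r (x, y))"

definition ybe_gamma :: "('a \<times> 'a \<Rightarrow> 'a \<times> 'a) \<Rightarrow> 'a \<Rightarrow> 'a \<Rightarrow> 'a" where
  "ybe_gamma r y x = snd (r (x, y))"

definition r12 :: "('a \<times> 'a \<Rightarrow> 'a \<times> 'a) \<Rightarrow> 'a \<times> 'a \<times> 'a \<Rightarrow> 'a \<times> 'a \<times> 'a" where
  "r12 r t = (case t of (a, b, c) \<Rightarrow> (fst (r (a, b)), snd (r (a, b)), c))"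

definition r23 :: "('a \<times> 'a \<Rightarrow> 'a \<times> 'a) \<Rightarrow> 'a \<times> 'a \<times> 'a \<Rightarrow> 'a \<times> 'a \<times> 'a" where
  "r23 r t = (case t of (a, b, c) \<Rightarrow> (a, fst (r (b, c)), snd (r (b, c))))"

definition ybe_solution :: "'a set \<Rightarrow> ('a \<times> 'a \<Rightarrow> 'a \<times> 'a) \<Rightarrow> bool" where
  "ybe_solution X r \<longleftrightarrow>
     X \<noteq> {} \<and>
     (\<forall>x\<in>X. \<forall>y\<in>X. fst (r (x, y)) \<in> X \<and> snd (r (x, y)) \<in> X) \<and>
     (\<forall>x\<in>X. \<forall>y\<in>X. r (r (x, y)) = (x, y)) \<and>
     (\<forall>x\<in>X. bij_betw (ybe_sigma r x) X X) \<and>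
     (\<forall>y\<in>X. bij_betw (ybe_gamma r y) X X) \<and>
     (\<forall>a\<in>X. \<forall>b\<in>X. \<forall>c\<in>X.
       r12 r (r23 r (r12 r (a, b, c))) = r23 r (r12 r (r23 r (a, b, c))))"

text \<open>The permutation group G(X,r) = < sigma_x : x in X > inside Sym_X
  (HOL-Algebra's BijGroup, whose elements are bijections of X, extensional outside X).\<close>
definition perm_group :: "'a set \<Rightarrow> ('a \<times> 'a \<Rightarrow> 'a \<times> 'a) \<Rightarrow> ('a \<Rightarrow> 'a) monoid" where
  "perm_group X r = subgroup_generated (BijGroup X) ((\<lambda>x. restrict (ybe_sigma r x) X) ` X)"

definition sylow_subgroup :: "('g, 'b) monoid_scheme \<Rightarrow> nat \<Rightarrow> 'g set \<Rightarrow> bool" where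
  "sylow_subgroup G p P \<longleftrightarrow> subgroup P G \<and> card P = p ^ multiplicity p (order G)"

end

theory Submission
  imports Defs "HOL-Algebra.Multiplicative_Group" "HOL-Algebra.Sylow" "HOL-Algebra.Group_Action"
begin

text \<open>
  The permutation group of a finite solution is a left brace with \<open>\<lambda>\<^sub>g(\<sigma>\<^sub>x) = \<sigma>\<^sub>g\<^sub>(\<^sub>x\<^sub>)\<close>.
  In a finite left brace of order \<open>p\<^sup>k m\<close> with \<open>p \<nmid> m\<close> whose multiplicative group has
  an abelian normal Sylow \<open>p\<close>-subgroup \<open>P\<close>, the \<open>p\<^sup>k\<close>-torsion of the additive group is a
  multiplicative subgroup of order \<open>p\<^sup>k\<close>, hence equals \<open>P\<close>. So \<open>P\<close> acts on itself through
  \<open>\<lambda>\<close>, and as a \<open>p\<close>-group it fixes some \<open>c \<noteq> 1\<close>. Since \<open>P\<close> is abelian, \<open>\<lambda>\<^sub>c\<close> is the identity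
  on \<open>P\<close>; since \<open>P\<close> is normal, \<open>P\<close> acts trivially on the \<open>m\<close>-torsion; so \<open>\<lambda>\<^sub>c = id\<close>.
  If \<open>c\<close> moves \<open>x\<close>, then \<open>\<sigma>\<^sub>c\<^sub>(\<^sub>x\<^sub>) = \<lambda>\<^sub>c(\<sigma>\<^sub>x) = \<sigma>\<^sub>x\<close> with \<open>c(x) \<noteq> x\<close>.
\<close>

lemma coprimeI_by_prime_dvd:
  fixes a b :: nat
  assumes "\<And>q. prime q \<Longrightarrow> q dvd a \<Longrightarrow> q dvd b \<Longrightarrow> False"
  shows "coprime a b"
proof (rule ccontr)
  assume "\<not> coprime a b"
  then obtain q where "prime q" "q dvd gcd a b"
    using prime_factor_nat[of "gcd a b"] by (auto simp: coprime_iff_gcd_eq_1)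
  then show False using assms by auto
qed

lemma coprime_factors_eq:
  fixes a b x y :: nat
  assumes "x * y = a * b" "coprime x b" "coprime y a" "a > 0" "b > 0"
  shows "x = a"
proof (rule ccontr)
  have "x dvd a" using assms(1,2) by (metis coprime_dvd_mult_left_iff dvd_triv_left)
  moreover have "y dvd b" using assms(1,3) by (metis coprime_dvd_mult_right_iff dvd_triv_right)
  ultimately have "x \<le> a" "y \<le> b" "y > 0" using assms(4,5) by (auto intro: dvd_imp_le)
  moreover assume "x \<noteq> a"
  ultimately have "x * y < a * b" by (intro mult_less_le_imp_less) auto
  then show False using assms(1) by simp
qed

lemma prime_power_part:
  fixes n p :: nat
  assumes "prime p" "p dvd n" "n > 0"
  defines "k \<equiv> multiplicity p n"
  shows "n = p ^ k * (n div p ^ k)" "coprime p (n div p ^ k)" "k > 0"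
proof -
  have "\<not> is_unit p" using prime_gt_1_nat[OF assms(1)] by simp
  then show "n = p ^ k * (n div p ^ k)" "coprime p (n div p ^ k)" "k > 0"
    using multiplicity_dvd[of p n] multiplicity_decompose[of n p] multiplicity_gt_zero_iff[of n p]
      assms prime_imp_coprime by (simp_all add: k_def)
qed

lemma (in group) pow_eq_one_coprime:
  assumes "x \<in> carrier G" "x [^] (a::nat) = \<one>" "x [^] (b::nat) = \<one>" "coprime a b"
  shows "x = \<one>"
proof -
  have "ord x dvd gcd a b" using assms(1-3) pow_eq_id by simp
  then have "x [^] (1::nat) = \<one>" using assms(1,4) pow_eq_id[of x 1] by simp
  then show ?thesis using assms(1) by simp
qed

lemma (in group) subgroup_pow_card_eq_one:
  assumes "subgroup H G" "finite H" "x \<in> H"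
  shows "x [^] card H = \<one>"
proof -
  interpret H: group "G\<lparr>carrier := H\<rparr>" using assms(1) subgroup.subgroup_is_group is_group by blast
  have "x [^]\<^bsub>G\<lparr>carrier := H\<rparr>\<^esub> order (G\<lparr>carrier := H\<rparr>) = \<one>"
    using H.pow_order_eq_1 assms(3) by simp
  then show ?thesis by (simp add: nat_pow_def order_def)
qed

lemma (in group) cauchy_exists_elem:
  assumes "finite (carrier G)" "prime q" "q dvd order G"
  shows "\<exists>x\<in>carrier G. x \<noteq> \<one> \<and> x [^] q = \<one>"
proof -
  obtain m where "order G = q ^ 1 * m" using assms(3) by auto
  then obtain K where K: "subgroup K G" "card K = q"
    using sylow_thm[OF assms(2) is_group _ assms(1)] by fastforce
  have "finite K" using K(1) assms(1) subgroup.subset finite_subset by blast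
  moreover have "\<not> K \<subseteq> {\<one>}"
  proof
    assume "K \<subseteq> {\<one>}"
    then have "card K \<le> 1" using card_mono[of "{\<one>}" K] by simp
    then show False using K(2) prime_gt_1_nat[OF assms(2)] by simp
  qed
  then obtain x where "x \<in> K" "x \<noteq> \<one>" by blast
  moreover have "x [^] q = \<one>"
    using subgroup_pow_card_eq_one[OF K(1) \<open>finite K\<close> \<open>x \<in> K\<close>] K(2) by simp
  ultimately show ?thesis using subgroup.mem_carrier[OF K(1)] by blast
qed

lemma (in normal) mem_if_pow_coprime_index:
  assumes "finite (carrier G)" "coprime n (card (rcosets H))" "x \<in> carrier G" "x [^] n = \<one>"
  shows "x \<in> H"
proof -
  interpret Q: group "G Mod H" by (rule factorgroup_is_group)
  have hom: "(\<lambda>a. H #> a) \<in> hom G (G Mod H)" by (rule r_coset_hom_Mod)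
  have Hx: "H #> x \<in> carrier (G Mod H)" using hom assms(3) by (auto simp: hom_def)
  have "(H #> x) [^]\<^bsub>G Mod H\<^esub> n = H #> (x [^] n)"
    using group_hom.hom_nat_pow[OF group_hom.intro[OF is_group Q.is_group] assms(3)] hom
    by (simp add: group_hom_axioms_def)
  then have "(H #> x) [^]\<^bsub>G Mod H\<^esub> n = \<one>\<^bsub>G Mod H\<^esub>"
    using assms(4) coset_join2[OF one_closed is_subgroup] by simp
  moreover have "(H #> x) [^]\<^bsub>G Mod H\<^esub> card (rcosets H) = \<one>\<^bsub>G Mod H\<^esub>"
    using Q.pow_order_eq_1[OF Hx] by (simp add: order_def FactGroup_def)
  ultimately have "H #> x = H"
    using Q.pow_eq_one_coprime[OF Hx _ _ assms(2)] by simp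
  then show ?thesis using rcos_self[OF assms(3) is_subgroup] by simp
qed

lemma (in group) finite_submonoid_inv_closed:
  assumes "finite (carrier G)" "S \<subseteq> carrier G" "\<one> \<in> S"
    and "\<And>a b. a \<in> S \<Longrightarrow> b \<in> S \<Longrightarrow> a \<otimes> b \<in> S" and a: "a \<in> S"
  shows "inv a \<in> S"
proof -
  have aG: "a \<in> carrier G" using a assms(2) by blast
  have pow_in: "a [^] n \<in> S" for n :: nat
    by (induction n) (simp_all add: assms(3,4) a)
  obtain n where "order G = Suc n"
    using order_gt_0_iff_finite assms(1) gr0_implies_Suc by auto
  then have "a [^] n \<otimes> a = \<one>" using pow_order_eq_1[OF aG] by simp
  then have "inv a = a [^] n" using inv_equality aG by simp
  then show ?thesis using pow_in by simp
qed

lemma (in comm_group) product_eq_imp_quotient_eq: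
  assumes "a \<in> carrier G" "b \<in> carrier G" "c \<in> carrier G" "d \<in> carrier G" "a \<otimes> b = c \<otimes> d"
  shows "b \<otimes> inv c = d \<otimes> inv a"
proof -
  have "b \<otimes> inv c = inv a \<otimes> (a \<otimes> b) \<otimes> inv c" using assms(1-4) by (simp add: m_assoc[symmetric])
  also have "\<dots> = inv a \<otimes> (d \<otimes> (c \<otimes> inv c))" using assms by (simp add: m_assoc m_comm[of c d])
  also have "\<dots> = d \<otimes> inv a" using assms(1-4) by (simp add: m_comm)
  finally show ?thesis .
qed

section \<open>Torsion subgroups and \<open>p\<close>-group actions\<close>

definition torsion :: "('a, 'b) monoid_scheme \<Rightarrow> nat \<Rightarrow> 'a set" where
  "torsion G n = {x \<in> carrier G. x [^]\<^bsub>G\<^esub> n = \<one>\<^bsub>G\<^esub>}"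

lemma (in comm_group) subgroup_torsion: "subgroup (torsion G n) G"
proof (rule subgroupI)
  show "torsion G n \<subseteq> carrier G" "torsion G n \<noteq> {}"
    by (auto simp: torsion_def intro!: exI[of _ \<one>])
next
  fix x y assume "x \<in> torsion G n" "y \<in> torsion G n"
  then show "inv x \<in> torsion G n" "x \<otimes> y \<in> torsion G n"
    by (auto simp: torsion_def nat_pow_inv nat_pow_distrib)
qed

lemma (in group) torsion_coprime_inter:
  "coprime a b \<Longrightarrow> x \<in> torsion G a \<Longrightarrow> x \<in> torsion G b \<Longrightarrow> x = \<one>"
  using pow_eq_one_coprime by (auto simp: torsion_def)

lemma (in comm_group) coprime_decomp_torsion:
  assumes "order G = a * b" "coprime a b" "x \<in> carrier G"
  shows "\<exists>u\<in>torsion G a. \<exists>v\<in>torsion G b. x = u \<otimes> v"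
proof -
  have "gcd (int a) (int b) = 1"
    using assms(2) by (metis coprime_iff_gcd_eq_1 gcd_int_int_eq of_nat_1)
  then obtain s t :: int where st: "s * int a + t * int b = 1"
    using bezout_int[of "int a" "int b"] by metis
  have order_multiple: "x [^] (int (a * b) * i) = \<one>" for i :: int
  proof -
    have "x [^] (int (a * b) * i) = (x [^] int (a * b)) [^] i"
      by (rule int_pow_pow[OF assms(3), symmetric])
    also have "x [^] int (a * b) = \<one>"
      using pow_order_eq_1[OF assms(3)] assms(1) int_pow_int[of G x "a * b"] by simp
    finally show ?thesis by simp
  qed
  define u where "u = x [^] (t * int b)"
  define v where "v = x [^] (s * int a)"
  have "u [^] a = x [^] (int (a * b) * t)"
    using int_pow_pow[OF assms(3), of "t * int b" "int a"] int_pow_int[of G u a]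
    by (simp add: u_def mult.commute mult.left_commute)
  moreover have "v [^] b = x [^] (int (a * b) * s)"
    using int_pow_pow[OF assms(3), of "s * int a" "int b"] int_pow_int[of G v b]
    by (simp add: v_def mult.commute mult.left_commute)
  moreover have "x = u \<otimes> v"
    using int_pow_mult[OF assms(3), of "t * int b" "s * int a"] st assms(3)
    by (simp add: u_def v_def add.commute)
  moreover have "u \<in> carrier G" "v \<in> carrier G" using assms(3) by (simp_all add: u_def v_def)
  ultimately show ?thesis
    unfolding torsion_def using order_multiple[of t] order_multiple[of s] by auto
qed

lemma (in comm_group) coprime_card_torsion:
  assumes "finite (carrier G)" "coprime a b"
  shows "coprime (card (torsion G a)) b"
proof (rule coprimeI_by_prime_dvd)
  fix q assume q: "prime q" "q dvd card (torsion G a)" "q dvd b"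
  interpret T: group "G\<lparr>carrier := torsion G a\<rparr>"
    by (rule subgroup.subgroup_is_group[OF subgroup_torsion is_group])
  have "finite (torsion G a)" using assms(1) finite_subset by (auto simp: torsion_def)
  then obtain x where x: "x \<in> torsion G a" "x \<noteq> \<one>" "x [^] q = \<one>"
    using T.cauchy_exists_elem[of q] q by (auto simp: order_def nat_pow_def)
  obtain c where "b = q * c" using q(3) by blast
  then have "x [^] b = \<one>" using x by (auto simp: torsion_def nat_pow_pow[symmetric])
  then have "x \<in> torsion G b" using x(1) by (simp add: torsion_def)
  then show False using torsion_coprime_inter[OF assms(2) x(1)] x(2) by simp
qed

lemma (in comm_group) card_torsion_coprime:
  assumes "finite (carrier G)" "order G = a * b" "coprime a b"
  shows "card (torsion G a) = a"
proof -
  let ?mult = "\<lambda>(u, v). u \<otimes> v"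
  have "inj_on ?mult (torsion G a \<times> torsion G b)"
  proof (rule inj_onI, clarify)
    fix u v u' v'
    assume u: "u \<in> torsion G a" "u' \<in> torsion G a" and v: "v \<in> torsion G b" "v' \<in> torsion G b"
      and eq: "u \<otimes> v = u' \<otimes> v'"
    have carr: "u \<in> carrier G" "u' \<in> carrier G" "v \<in> carrier G" "v' \<in> carrier G"
      using u v by (auto simp: torsion_def)
    have "inv u' \<otimes> u = inv u' \<otimes> (u \<otimes> v) \<otimes> inv v" using carr by (simp add: m_assoc)
    also have "\<dots> = v' \<otimes> inv v" using carr by (simp add: eq m_assoc[symmetric])
    finally have "inv u' \<otimes> u = v' \<otimes> inv v" .
    moreover have "inv u' \<otimes> u \<in> torsion G a" "v' \<otimes> inv v \<in> torsion G b"
      using u v subgroup_torsion by (auto intro: subgroup.m_closed subgroup.m_inv_closed)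
    ultimately have "inv u' \<otimes> u = \<one>" using torsion_coprime_inter[OF assms(3)] by metis
    moreover have "u = u' \<otimes> (inv u' \<otimes> u)" using carr by (simp add: m_assoc[symmetric])
    ultimately have "u = u'" using carr by simp
    then show "u = u' \<and> v = v'" using eq carr by simp
  qed
  moreover have "?mult ` (torsion G a \<times> torsion G b) = carrier G"
  proof
    show "?mult ` (torsion G a \<times> torsion G b) \<subseteq> carrier G" by (auto simp: torsion_def)
    show "carrier G \<subseteq> ?mult ` (torsion G a \<times> torsion G b)"
      using coprime_decomp_torsion[OF assms(2,3)] by fastforce
  qed
  ultimately have "card (torsion G a \<times> torsion G b) = order G"
    using card_image by (fastforce simp: order_def)
  then have "card (torsion G a) * card (torsion G b) = a * b"
    using assms(2) by (simp add: card_cartesian_product)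
  moreover have "coprime (card (torsion G a)) b" by (rule coprime_card_torsion[OF assms(1,3)])
  moreover have "coprime (card (torsion G b)) a"
    using coprime_card_torsion[OF assms(1)] assms(3) by (simp add: coprime_commute)
  moreover have "a > 0" "b > 0" using assms(1,2) order_gt_0_iff_finite by auto
  ultimately show ?thesis by (rule coprime_factors_eq)
qed

lemma (in group_action) prime_dvd_card_orbit:
  assumes "prime p" "order G = p ^ n" "x \<in> E" "g \<in> carrier G" "\<phi> g x \<noteq> x"
  shows "p dvd card (orbit G \<phi> x)"
proof -
  have "card (orbit G \<phi> x) dvd p ^ n"
    using orbit_stabilizer_theorem[OF assms(3)] assms(2) by (metis dvd_triv_left)
  then obtain i where i: "card (orbit G \<phi> x) = p ^ i"
    using divides_primepow_nat[OF assms(1)] by blast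
  show ?thesis
  proof (cases i)
    case 0
    then obtain y where "orbit G \<phi> x = {y}" using i card_1_singletonE by auto
    moreover have "x \<in> orbit G \<phi> x" "\<phi> g x \<in> orbit G \<phi> x"
      using orbit_refl[OF assms(3)] assms(4) by (auto simp: orbit_def)
    ultimately show ?thesis using assms(5) by simp
  qed (use i in simp)
qed

lemma (in group_action) p_group_fixed_point:
  assumes "prime p" "order G = p ^ n" "finite E" "p dvd card E"
    and "e \<in> E" "\<And>g. g \<in> carrier G \<Longrightarrow> \<phi> g e = e"
  shows "\<exists>x\<in>E. x \<noteq> e \<and> (\<forall>g\<in>carrier G. \<phi> g x = x)"
proof (rule ccontr)
  assume no_fixed: "\<not> ?thesis"
  have orbit_e: "orbit G \<phi> e = {e}"
    using orbit_refl[OF assms(5)] assms(6) by (auto simp: orbit_def)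
  have fin: "finite (orbits G E \<phi>)"
    using assms(3) by (simp add: orbits_def setcompr_eq_image)
  have e_orbit: "{e} \<in> orbits G E \<phi>"
    using orbit_e assms(5) unfolding orbits_def by blast
  have "(\<Sum>orb\<in>orbits G E \<phi>. card orb) = (\<Sum>orb\<in>orbits G E \<phi>. \<Sum>x\<in>orb. 1::nat)"
    by (rule sum.cong) auto
  also have "\<dots> = card E"
    using disjoint_sum[OF assms(3), of "\<lambda>_. 1::nat"] by simp
  finally have "card E = 1 + (\<Sum>orb\<in>orbits G E \<phi> - {{e}}. card orb)"
    using sum.remove[OF fin e_orbit, of card] by simp
  moreover have "p dvd (\<Sum>orb\<in>orbits G E \<phi> - {{e}}. card orb)"
  proof (rule dvd_sum)
    fix orb assume orb: "orb \<in> orbits G E \<phi> - {{e}}"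
    then obtain x where x: "x \<in> E" "orb = orbit G \<phi> x" unfolding orbits_def by blast
    then have "x \<noteq> e" using orb orbit_e by auto
    then obtain g where "g \<in> carrier G" "\<phi> g x \<noteq> x" using no_fixed x(1) by blast
    then show "p dvd card orb" using prime_dvd_card_orbit[OF assms(1,2) x(1)] x(2) by simp
  qed
  ultimately have "p dvd 1" using assms(4) dvd_add_left_iff by metis
  then show False using assms(1) by simp
qed

section \<open>Left braces\<close>

text \<open>
  A left brace is given by its multiplicative group \<open>G\<close>, its additive group \<open>A\<close> on the same
  carrier and the maps \<open>\<lambda>\<^sub>g h = -g + g h\<close>; additivity of every \<open>\<lambda>\<^sub>g\<close> is the brace axiom.
\<close>

locale left_brace =
  fixes G :: "('g, 'z) monoid_scheme" (structure)
    and A :: "'g monoid"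
    and lam :: "'g \<Rightarrow> 'g \<Rightarrow> 'g"
  assumes mult_group: "group G"
    and add_group: "comm_group A"
    and carrier_add: "carrier A = carrier G"
    and one_add: "\<one>\<^bsub>A\<^esub> = \<one>"
    and lam_closed: "g \<in> carrier G \<Longrightarrow> h \<in> carrier G \<Longrightarrow> lam g h \<in> carrier G"
    and lam_add: "g \<in> carrier G \<Longrightarrow> h \<in> carrier G \<Longrightarrow> k \<in> carrier G \<Longrightarrow>
      lam g (h \<otimes>\<^bsub>A\<^esub> k) = lam g h \<otimes>\<^bsub>A\<^esub> lam g k"
    and mult_eq_add_lam: "g \<in> carrier G \<Longrightarrow> h \<in> carrier G \<Longrightarrow> g \<otimes> h = g \<otimes>\<^bsub>A\<^esub> lam g h"
begin

sublocale group G by (rule mult_group)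
sublocale add: comm_group A by (rule add_group)

abbreviation add_op (infixl "\<boxplus>" 65) where "x \<boxplus> y \<equiv> x \<otimes>\<^bsub>A\<^esub> y"

lemma add_pow_closed [simp]: "x \<in> carrier G \<Longrightarrow> x [^]\<^bsub>A\<^esub> (n::nat) \<in> carrier G"
  using add.nat_pow_closed carrier_add by simp

lemma add_one [simp]: "x \<in> carrier G \<Longrightarrow> \<one> \<boxplus> x = x" "x \<in> carrier G \<Longrightarrow> x \<boxplus> \<one> = x"
  using add.l_one add.r_one carrier_add one_add by auto

lemma add_cancel_left:
  "x \<in> carrier G \<Longrightarrow> y \<in> carrier G \<Longrightarrow> z \<in> carrier G \<Longrightarrow> x \<boxplus> y = x \<boxplus> z \<Longrightarrow> y = z"
  using add.Units_l_cancel[of x y z] add.Units_eq carrier_add by simp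

lemma lam_one_right: "g \<in> carrier G \<Longrightarrow> lam g \<one> = \<one>"
  using lam_add[of g \<one> \<one>] lam_closed[of g \<one>] add_cancel_left[of "lam g \<one>" "lam g \<one>" \<one>]
  by simp

lemma lam_one: "h \<in> carrier G \<Longrightarrow> lam \<one> h = h"
  using mult_eq_add_lam[of \<one> h] lam_closed[of \<one> h] by simp

lemma lam_mult:
  assumes "g \<in> carrier G" "h \<in> carrier G" "k \<in> carrier G"
  shows "lam (g \<otimes> h) k = lam g (lam h k)"
proof -
  have "(g \<otimes> h) \<boxplus> lam (g \<otimes> h) k = g \<otimes> h \<otimes> k"
    using assms by (simp add: mult_eq_add_lam[of "g \<otimes> h" k])
  also have "\<dots> = g \<boxplus> lam g (h \<otimes> k)"
    using assms by (simp add: m_assoc mult_eq_add_lam[of g "h \<otimes> k"])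
  also have "\<dots> = g \<boxplus> lam g (h \<boxplus> lam h k)"
    using assms by (simp add: mult_eq_add_lam[of h k])
  also have "\<dots> = (g \<boxplus> lam g h) \<boxplus> lam g (lam h k)"
    using assms add.m_assoc[of g "lam g h" "lam g (lam h k)"]
    by (simp add: lam_add lam_closed carrier_add)
  also have "\<dots> = (g \<otimes> h) \<boxplus> lam g (lam h k)"
    using assms by (simp add: mult_eq_add_lam[of g h])
  finally show ?thesis
    using assms by (meson add_cancel_left lam_closed m_closed)
qed

lemma lam_inv_cancel: "g \<in> carrier G \<Longrightarrow> h \<in> carrier G \<Longrightarrow> lam (inv g) (lam g h) = h"
  using lam_mult[of "inv g" g h] lam_one by simp

lemma lam_nat_pow:
  "g \<in> carrier G \<Longrightarrow> x \<in> carrier G \<Longrightarrow> lam g (x [^]\<^bsub>A\<^esub> n) = lam g x [^]\<^bsub>A\<^esub> (n::nat)"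
  by (induction n) (simp_all add: lam_one_right one_add lam_add)

lemma lam_inv_right: "g \<in> carrier G \<Longrightarrow> lam g (inv g) = inv\<^bsub>A\<^esub> g"
  using mult_eq_add_lam[of g "inv g"] lam_closed[of g "inv g"] carrier_add one_add
  by (metis add.inv_equality add.m_comm inv_closed r_inv)

lemma subgroup_if_lam_invariant:
  assumes S: "subgroup S A"
    and invariant: "\<And>g x. g \<in> carrier G \<Longrightarrow> x \<in> S \<Longrightarrow> lam g x \<in> S"
  shows "subgroup S G"
proof (rule subgroupI)
  show S_carrier: "S \<subseteq> carrier G" using subgroup.subset[OF S] carrier_add by simp
  show "S \<noteq> {}" using subgroup.one_closed[OF S] by auto
  fix g h assume g: "g \<in> S" and h: "h \<in> S"
  then show "g \<otimes> h \<in> S"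
    using S_carrier mult_eq_add_lam invariant subgroup.m_closed[OF S] by (metis subsetD)
  have "inv g = lam (inv g) (inv\<^bsub>A\<^esub> g)"
    using lam_inv_cancel[of g "inv g"] lam_inv_right g S_carrier by auto
  then show "inv g \<in> S"
    using invariant subgroup.m_inv_closed[OF S g] g S_carrier by (metis inv_closed subsetD)
qed

lemma lam_torsion: "g \<in> carrier G \<Longrightarrow> x \<in> torsion A n \<Longrightarrow> lam g x \<in> torsion A n"
  by (auto simp: torsion_def lam_nat_pow[symmetric] lam_one_right lam_closed carrier_add one_add)

lemma subgroup_mult_torsion: "subgroup (torsion A n) G"
  by (rule subgroup_if_lam_invariant[OF add.subgroup_torsion lam_torsion])

lemma group_action_lam:
  assumes H: "subgroup H G" and "S \<subseteq> carrier G"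
    and invariant: "\<And>h x. h \<in> H \<Longrightarrow> x \<in> S \<Longrightarrow> lam h x \<in> S"
  shows "group_action (G\<lparr>carrier := H\<rparr>) S (\<lambda>h. restrict (lam h) S)"
proof -
  have H_carrier: "h \<in> H \<Longrightarrow> h \<in> carrier G" for h using subgroup.subset[OF H] by blast
  have bij: "restrict (lam h) S \<in> carrier (BijGroup S)" if h: "h \<in> H" for h
  proof -
    have "bij_betw (lam h) S S"
    proof (rule bij_betwI[of _ _ _ "lam (inv h)"])
      show "lam h \<in> S \<rightarrow> S" "lam (inv h) \<in> S \<rightarrow> S"
        using invariant h subgroup.m_inv_closed[OF H h] by auto
      show "lam (inv h) (lam h x) = x" "lam h (lam (inv h) x) = x" if "x \<in> S" for x
        using lam_inv_cancel[of h x] lam_inv_cancel[of "inv h" x] h that assms(2) H_carrier by auto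
    qed
    then show ?thesis by (simp add: BijGroup_def Bij_def)
  qed
  have "restrict (lam (g \<otimes> h)) S = restrict (lam g) S \<otimes>\<^bsub>BijGroup S\<^esub> restrict (lam h) S"
    if "g \<in> H" "h \<in> H" for g h
    using that bij[of g] bij[of h] invariant assms(2) H_carrier
    by (auto simp: BijGroup_def compose_def lam_mult intro!: restrict_ext)
  then have "(\<lambda>h. restrict (lam h) S) \<in> hom (G\<lparr>carrier := H\<rparr>) (BijGroup S)"
    using bij by (auto intro: homI)
  then show ?thesis
    using subgroup.subgroup_is_group[OF H mult_group] group_BijGroup
    by (auto intro!: group_action.intro group_hom.intro group_hom_axioms.intro)
qed

end

locale left_brace_normal_sylow = left_brace +
  fixes p k m :: nat and P
  assumes finite_carrier: "finite (carrier G)"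
    and prime_p: "prime p" and k_pos: "k > 0"
    and order_eq: "order G = p ^ k * m" and coprime_p_m: "coprime p m"
    and normal_P: "P \<lhd> G" and card_P: "card P = p ^ k"
    and abelian_P: "\<And>a b. a \<in> P \<Longrightarrow> b \<in> P \<Longrightarrow> a \<otimes> b = b \<otimes> a"
begin

lemma coprime_pow_p_m: "coprime (p ^ k) m"
  using coprime_p_m by simp

lemma subgroup_P: "subgroup P G"
  using normal_P by (rule normal_imp_subgroup)

lemma P_carrier: "a \<in> P \<Longrightarrow> a \<in> carrier G"
  using subgroup.subset[OF subgroup_P] by blast

lemma finite_P: "finite P"
  using finite_subset[OF subgroup.subset[OF subgroup_P] finite_carrier] .

lemma card_torsion_p: "card (torsion A (p ^ k)) = p ^ k"
  using add.card_torsion_coprime[of "p ^ k" m] finite_carrier order_eq coprime_pow_p_m carrier_add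
  by (simp add: order_def)

lemma torsion_p_eq_P: "torsion A (p ^ k) = P"
proof -
  have "card (rcosets P) * p ^ k = p ^ k * m"
    using lagrange[OF subgroup_P] card_P order_eq by simp
  then have index: "card (rcosets P) = m"
    using prime_gt_0_nat[OF prime_p] by simp
  have "torsion A (p ^ k) \<subseteq> P"
  proof
    fix u assume u: "u \<in> torsion A (p ^ k)"
    have "finite (torsion A (p ^ k))"
      using card_torsion_p prime_gt_0_nat[OF prime_p] card_ge_0_finite by force
    then have "u [^] (p ^ k) = \<one>"
      using subgroup_pow_card_eq_one[OF subgroup_mult_torsion _ u] card_torsion_p by simp
    moreover have "u \<in> carrier G" using u by (simp add: torsion_def carrier_add)
    moreover have "coprime (p ^ k) (card (rcosets P))" using index coprime_pow_p_m by simp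
    ultimately show "u \<in> P"
      using normal.mem_if_pow_coprime_index[OF normal_P finite_carrier] by blast
  qed
  then show ?thesis
    using card_subset_eq[OF finite_P] card_torsion_p card_P by simp
qed

lemma P_inter_torsion_m: "a \<in> P \<Longrightarrow> a \<in> torsion A m \<Longrightarrow> a = \<one>"
  using add.torsion_coprime_inter[OF coprime_pow_p_m] torsion_p_eq_P one_add by metis

lemma lam_P_torsion_m:
  assumes a: "a \<in> P" and v: "v \<in> torsion A m"
  shows "lam a v = v"
proof -
  txt \<open>Writing \<open>a v = v a'\<close> with \<open>a' \<in> P\<close> puts \<open>\<lambda>\<^sub>a(v) - v = \<lambda>\<^sub>v(a') - a\<close> in both torsion parts.\<close>
  have aG: "a \<in> carrier G" and vG: "v \<in> carrier G"
    using a v P_carrier by (auto simp: torsion_def carrier_add)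
  define a' where "a' = inv v \<otimes> a \<otimes> v"
  have a'P: "a' \<in> P"
    unfolding a'_def using normal_inv_iff normal_P a vG by (metis inv_closed inv_inv)
  have a'G: "a' \<in> carrier G" using a'P P_carrier by auto
  have "a \<otimes> v = v \<otimes> a'" unfolding a'_def using aG vG by (simp add: m_assoc[symmetric])
  then have "a \<boxplus> lam a v = v \<boxplus> lam v a'" using mult_eq_add_lam aG vG a'G by simp
  then have eq: "lam a v \<otimes>\<^bsub>A\<^esub> inv\<^bsub>A\<^esub> v = lam v a' \<otimes>\<^bsub>A\<^esub> inv\<^bsub>A\<^esub> a"
    using add.product_eq_imp_quotient_eq aG vG a'G lam_closed carrier_add by simp
  have "lam a v \<otimes>\<^bsub>A\<^esub> inv\<^bsub>A\<^esub> v \<in> torsion A m"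
    using add.subgroup_torsion lam_torsion[OF aG v] v
    by (auto intro: subgroup.m_closed subgroup.m_inv_closed)
  moreover have "lam v a' \<in> torsion A (p ^ k)" "a \<in> torsion A (p ^ k)"
    using lam_torsion[OF vG] a a'P torsion_p_eq_P by auto
  then have "lam v a' \<otimes>\<^bsub>A\<^esub> inv\<^bsub>A\<^esub> a \<in> P"
    using add.subgroup_torsion torsion_p_eq_P
    by (blast intro: subgroup.m_closed subgroup.m_inv_closed)
  ultimately have "lam a v \<otimes>\<^bsub>A\<^esub> inv\<^bsub>A\<^esub> v = \<one>\<^bsub>A\<^esub>"
    using P_inter_torsion_m eq by (simp add: one_add)
  then have "inv\<^bsub>A\<^esub> (inv\<^bsub>A\<^esub> v) = lam a v"
    using add.inv_equality[of "lam a v" "inv\<^bsub>A\<^esub> v"] lam_closed[OF aG vG] vG carrier_add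
      add.inv_closed[of v]
    by simp
  then show ?thesis using vG carrier_add by simp
qed

lemma exists_lam_fixed_in_P: "\<exists>c\<in>P. c \<noteq> \<one> \<and> (\<forall>b\<in>P. lam b c = c)"
proof -
  have P_invariant: "\<And>g x. g \<in> carrier G \<Longrightarrow> x \<in> P \<Longrightarrow> lam g x \<in> P"
    using lam_torsion torsion_p_eq_P by blast
  interpret act: group_action "G\<lparr>carrier := P\<rparr>" P "\<lambda>b. restrict (lam b) P"
    by (rule group_action_lam[OF subgroup_P]) (use P_carrier P_invariant in auto)
  have "order (G\<lparr>carrier := P\<rparr>) = p ^ k" using card_P by (simp add: order_def)
  moreover have "p dvd card P" using card_P k_pos by simp
  moreover have "\<one> \<in> P" using subgroup.one_closed[OF subgroup_P] by simp
  ultimately show ?thesis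
    using act.p_group_fixed_point[OF prime_p _ finite_P, of k \<one>] lam_one_right P_carrier by auto
qed

lemma socle_meets_P: "\<exists>c\<in>P. c \<noteq> \<one> \<and> (\<forall>g\<in>carrier G. lam c g = g)"
proof -
  obtain c where c: "c \<in> P" "c \<noteq> \<one>" and fixed: "\<And>b. b \<in> P \<Longrightarrow> lam b c = c"
    using exists_lam_fixed_in_P by blast
  have cG: "c \<in> carrier G" using c P_carrier by simp
  have on_P: "lam c b = b" if b: "b \<in> P" for b
  proof -
    have bG: "b \<in> carrier G" using b P_carrier by simp
    have "c \<boxplus> lam c b = c \<otimes> b" using mult_eq_add_lam[OF cG bG] by simp
    also have "\<dots> = b \<otimes> c" using abelian_P c(1) b by blast
    also have "\<dots> = b \<boxplus> lam b c" by (rule mult_eq_add_lam[OF bG cG])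
    also have "\<dots> = c \<boxplus> b" using fixed b add.m_comm carrier_add bG cG by simp
    finally show ?thesis using add_cancel_left cG bG lam_closed by blast
  qed
  have "lam c g = g" if g: "g \<in> carrier G" for g
  proof -
    have "order A = p ^ k * m" using order_eq carrier_add by (simp add: order_def)
    then obtain u v where u: "u \<in> P" and v: "v \<in> torsion A m" and g_eq: "g = u \<boxplus> v"
      using add.coprime_decomp_torsion[OF _ coprime_pow_p_m] g carrier_add torsion_p_eq_P by blast
    have "v \<in> carrier G" using v by (simp add: torsion_def carrier_add)
    then have "lam c g = lam c u \<boxplus> lam c v" using lam_add cG u P_carrier g_eq by simp
    then show ?thesis using on_P[OF u] lam_P_torsion_m[OF c(1) v] g_eq by simp
  qed
  then show ?thesis using c by blast
qed

end

section \<open>The left brace of a finite solution\<close>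

locale finite_solution =
  fixes X :: "'a set" and r :: "'a \<times> 'a \<Rightarrow> 'a \<times> 'a"
  assumes finite_X: "finite X" and solution: "ybe_solution X r"
begin

abbreviation G where "G \<equiv> perm_group X r"

definition sigma :: "'a \<Rightarrow> 'a \<Rightarrow> 'a" where "sigma x = restrict (ybe_sigma r x) X"

lemma group_G: "group G"
  unfolding perm_group_def by (rule group.group_subgroup_generated[OF group_BijGroup])

sublocale G: group G by (rule group_G)

lemma carrier_G_subset: "carrier G \<subseteq> Bij X"
  using group.carrier_subgroup_generated_subset[OF group_BijGroup]
  by (simp add: perm_group_def BijGroup_def)

lemma mult_G: "g \<in> carrier G \<Longrightarrow> h \<in> carrier G \<Longrightarrow> g \<otimes>\<^bsub>G\<^esub> h = compose X g h"
  using carrier_G_subset by (auto simp: perm_group_def BijGroup_def)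

lemma one_G: "\<one>\<^bsub>G\<^esub> = (\<lambda>x\<in>X. x)"
  by (simp add: perm_group_def BijGroup_def)

lemma finite_carrier_G: "finite (carrier G)"
proof (rule finite_subset)
  show "carrier G \<subseteq> X \<rightarrow>\<^sub>E X"
  proof
    fix f assume "f \<in> carrier G"
    then have "f \<in> Bij X" using carrier_G_subset by blast
    then show "f \<in> X \<rightarrow>\<^sub>E X"
      using Bij_imp_funcset[of f X] Bij_imp_extensional[of f X] by (simp add: PiE_iff Pi_iff)
  qed
  show "finite (X \<rightarrow>\<^sub>E X)" using finite_X by (simp add: finite_PiE)
qed

lemma apply_closed: "g \<in> carrier G \<Longrightarrow> x \<in> X \<Longrightarrow> g x \<in> X"
  using carrier_G_subset Bij_imp_funcset[of g X] by auto

lemma apply_mult: "g \<in> carrier G \<Longrightarrow> h \<in> carrier G \<Longrightarrow> x \<in> X \<Longrightarrow> (g \<otimes>\<^bsub>G\<^esub> h) x = g (h x)"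
  by (simp add: mult_G compose_def)

lemma apply_one: "x \<in> X \<Longrightarrow> \<one>\<^bsub>G\<^esub> x = x"
  by (simp add: one_G)

lemma apply_inv_left: "g \<in> carrier G \<Longrightarrow> x \<in> X \<Longrightarrow> (inv\<^bsub>G\<^esub> g) (g x) = x"
  using apply_mult[of "inv\<^bsub>G\<^esub> g" g x] apply_one by simp

lemma apply_inv_right: "g \<in> carrier G \<Longrightarrow> x \<in> X \<Longrightarrow> g ((inv\<^bsub>G\<^esub> g) x) = x"
  using apply_mult[of g "inv\<^bsub>G\<^esub> g" x] apply_one by simp

lemma G_eqI:
  assumes "g \<in> carrier G" "h \<in> carrier G" "\<And>x. x \<in> X \<Longrightarrow> g x = h x"
  shows "g = h"
proof (rule extensionalityI[where A = X])
  show "g \<in> extensional X" "h \<in> extensional X"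
    using assms(1,2) carrier_G_subset Bij_imp_extensional by auto
qed (use assms(3) in simp)

lemma sigma_in_G:
  assumes "x \<in> X" shows "sigma x \<in> carrier G"
proof -
  have "sigma x \<in> Bij X" using solution assms by (simp add: ybe_solution_def sigma_def Bij_def)
  then have "sigma x \<in> carrier (BijGroup X) \<inter> (\<lambda>x. restrict (ybe_sigma r x) X) ` X"
    using assms by (auto simp: BijGroup_def sigma_def)
  then show ?thesis unfolding perm_group_def carrier_subgroup_generated by (rule generate.incl)
qed

lemma sigma_apply: "x \<in> X \<Longrightarrow> y \<in> X \<Longrightarrow> sigma x y = fst (r (x, y))"
  by (simp add: sigma_def ybe_sigma_def)

lemma r_closed: "x \<in> X \<Longrightarrow> y \<in> X \<Longrightarrow> fst (r (x, y)) \<in> X \<and> snd (r (x, y)) \<in> X"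
  using solution by (simp add: ybe_solution_def)

lemma r_involutive: "x \<in> X \<Longrightarrow> y \<in> X \<Longrightarrow> r (r (x, y)) = (x, y)"
  using solution by (simp add: ybe_solution_def)

lemma sigma_mult_sigma:
  assumes a: "a \<in> X" and b: "b \<in> X"
  shows "sigma a \<otimes>\<^bsub>G\<^esub> sigma b = sigma (fst (r (a, b))) \<otimes>\<^bsub>G\<^esub> sigma (snd (r (a, b)))"
proof (rule G_eqI)
  show "sigma a \<otimes>\<^bsub>G\<^esub> sigma b \<in> carrier G"
    "sigma (fst (r (a, b))) \<otimes>\<^bsub>G\<^esub> sigma (snd (r (a, b))) \<in> carrier G"
    using a b r_closed sigma_in_G by auto
  fix c assume c: "c \<in> X"
  have "r12 r (r23 r (r12 r (a, b, c))) = r23 r (r12 r (r23 r (a, b, c)))"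
    using solution a b c unfolding ybe_solution_def by blast
  then have "fst (r (fst (r (a, b)), fst (r (snd (r (a, b)), c)))) = fst (r (a, fst (r (b, c))))"
    unfolding r12_def r23_def by (simp add: case_prod_beta)
  then show "(sigma a \<otimes>\<^bsub>G\<^esub> sigma b) c
      = (sigma (fst (r (a, b))) \<otimes>\<^bsub>G\<^esub> sigma (snd (r (a, b)))) c"
    using a b c r_closed by (simp add: apply_mult sigma_in_G sigma_apply)
qed

lemma sigma_mult_sigma_inv:
  assumes x: "x \<in> X" and y: "y \<in> X"
  shows "sigma x \<otimes>\<^bsub>G\<^esub> sigma ((inv\<^bsub>G\<^esub> sigma x) y) = sigma y \<otimes>\<^bsub>G\<^esub> sigma ((inv\<^bsub>G\<^esub> sigma y) x)"
proof -
  define b where "b = (inv\<^bsub>G\<^esub> sigma x) y"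
  define w where "w = snd (r (x, b))"
  have b: "b \<in> X" unfolding b_def using apply_closed sigma_in_G x y by simp
  have w: "w \<in> X" unfolding w_def using r_closed x b by simp
  have "fst (r (x, b)) = y"
    using apply_inv_right[OF sigma_in_G[OF x] y] sigma_apply[OF x b] by (simp add: b_def)
  then have r_xb: "r (x, b) = (y, w)" unfolding w_def by (metis prod.collapse)
  then have "r (y, w) = (x, b)" using r_involutive[OF x b] by simp
  then have "sigma y w = x" using sigma_apply y w by simp
  then have "w = (inv\<^bsub>G\<^esub> sigma y) x" using apply_inv_left[OF sigma_in_G[OF y] w] by simp
  then show ?thesis using sigma_mult_sigma[OF x b] r_xb b_def by simp
qed

text \<open>
  \<open>word_elem [x\<^sub>1, \<dots>, x\<^sub>n]\<close> is the element of \<open>\<G>(X,r)\<close> that the bijective 1-cocycle of the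
  structure group sends to \<open>x\<^sub>1 + \<dots> + x\<^sub>n\<close>. It depends only on the multiset of letters, so
  concatenation of words induces the additive group of the brace.
\<close>

definition word_elem :: "'a list \<Rightarrow> 'a \<Rightarrow> 'a" where
  "word_elem xs = foldl (\<lambda>g y. g \<otimes>\<^bsub>G\<^esub> sigma ((inv\<^bsub>G\<^esub> g) y)) \<one>\<^bsub>G\<^esub> xs"

lemma word_elem_Nil [simp]: "word_elem [] = \<one>\<^bsub>G\<^esub>"
  by (simp add: word_elem_def)

lemma word_elem_snoc:
  "word_elem (xs @ [y]) = word_elem xs \<otimes>\<^bsub>G\<^esub> sigma ((inv\<^bsub>G\<^esub> word_elem xs) y)"
  by (simp add: word_elem_def)

lemma word_elem_in_G: "set xs \<subseteq> X \<Longrightarrow> word_elem xs \<in> carrier G"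
  by (induction xs rule: rev_induct) (simp_all add: word_elem_snoc apply_closed sigma_in_G)

lemma word_elem_single: "x \<in> X \<Longrightarrow> word_elem [x] = sigma x"
  using word_elem_snoc[of "[]" x] by (simp add: apply_one sigma_in_G)

lemma map_apply_closed: "g \<in> carrier G \<Longrightarrow> set ys \<subseteq> X \<Longrightarrow> set (map g ys) \<subseteq> X"
  using apply_closed by auto

lemma word_elem_append_map:
  assumes xs: "set xs \<subseteq> X"
  shows "set ys \<subseteq> X \<Longrightarrow> word_elem (xs @ map (word_elem xs) ys) = word_elem xs \<otimes>\<^bsub>G\<^esub> word_elem ys"
proof (induction ys rule: rev_induct)
  case Nil
  then show ?case using word_elem_in_G[OF xs] by simp
next
  case (snoc y ys)
  define g where "g = word_elem xs"
  define h where "h = word_elem ys"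
  have g: "g \<in> carrier G" and h: "h \<in> carrier G" and y: "y \<in> X"
    using word_elem_in_G xs snoc.prems by (auto simp: g_def h_def)
  have "(inv\<^bsub>G\<^esub> (g \<otimes>\<^bsub>G\<^esub> h)) (g y) = (inv\<^bsub>G\<^esub> h) y"
    using g h y by (simp add: G.inv_mult_group apply_mult apply_inv_left apply_closed)
  then have "word_elem (xs @ map g (ys @ [y])) = (g \<otimes>\<^bsub>G\<^esub> h) \<otimes>\<^bsub>G\<^esub> sigma ((inv\<^bsub>G\<^esub> h) y)"
    using word_elem_snoc[of "xs @ map g ys" "g y"] snoc g_def h_def by simp
  also have "\<dots> = g \<otimes>\<^bsub>G\<^esub> word_elem (ys @ [y])"
    using g h y by (simp add: G.m_assoc sigma_in_G apply_closed word_elem_snoc h_def)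
  finally show ?case by (simp add: g_def)
qed

lemma word_elem_append:
  assumes "set xs \<subseteq> X" "set ys \<subseteq> X"
  shows "word_elem (xs @ ys) = word_elem xs \<otimes>\<^bsub>G\<^esub> word_elem (map (inv\<^bsub>G\<^esub> word_elem xs) ys)"
proof -
  have g: "word_elem xs \<in> carrier G" using word_elem_in_G assms(1) by simp
  then have "map (word_elem xs) (map (inv\<^bsub>G\<^esub> word_elem xs) ys) = ys"
    using apply_inv_right assms(2) by (induction ys) auto
  then show ?thesis
    using word_elem_append_map[OF assms(1) map_apply_closed[OF G.inv_closed[OF g] assms(2)]] by simp
qed

lemma word_elem_swap:
  assumes "set ws \<subseteq> X" "x \<in> X" "y \<in> X" "set zs \<subseteq> X"
  shows "word_elem (ws @ [x, y] @ zs) = word_elem (ws @ [y, x] @ zs)"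
proof -
  define h where "h = inv\<^bsub>G\<^esub> word_elem ws"
  have h: "h \<in> carrier G" using word_elem_in_G assms(1) by (simp add: h_def)
  have hxy: "h x \<in> X" "h y \<in> X" using h assms(2,3) apply_closed by auto
  have hzs: "set (map h zs) \<subseteq> X" using map_apply_closed[OF h assms(4)] .
  have two: "word_elem [u, v] = word_elem [v, u]" if "u \<in> X" "v \<in> X" for u v
    using word_elem_snoc[of "[u]" v] word_elem_snoc[of "[v]" u] sigma_mult_sigma_inv that
    by (simp add: word_elem_single)
  have "word_elem (ws @ [x, y] @ zs) = word_elem ws \<otimes>\<^bsub>G\<^esub> word_elem ([h x, h y] @ map h zs)"
    using word_elem_append[of ws "[x, y] @ zs"] assms by (simp add: h_def)
  also have "word_elem ([h x, h y] @ map h zs) = word_elem ([h y, h x] @ map h zs)"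
    using word_elem_append[of "[h x, h y]" "map h zs"] word_elem_append[of "[h y, h x]" "map h zs"]
      hxy hzs two by simp
  also have "word_elem ws \<otimes>\<^bsub>G\<^esub> \<dots> = word_elem (ws @ [y, x] @ zs)"
    using word_elem_append[of ws "[y, x] @ zs"] assms by (simp add: h_def)
  finally show ?thesis .
qed

lemma word_elem_move:
  assumes "set ws \<subseteq> X" "set us \<subseteq> X" "x \<in> X" "set vs \<subseteq> X"
  shows "word_elem (ws @ us @ x # vs) = word_elem (ws @ x # us @ vs)"
  using assms(2,4)
proof (induction us arbitrary: vs rule: rev_induct)
  case (snoc u us)
  have "word_elem (ws @ (us @ [u]) @ x # vs) = word_elem ((ws @ us) @ [u, x] @ vs)" by simp
  also have "\<dots> = word_elem ((ws @ us) @ [x, u] @ vs)"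
    using word_elem_swap[of "ws @ us" u x vs] assms(1,3) snoc.prems by simp
  also have "\<dots> = word_elem (ws @ x # us @ u # vs)"
    using snoc.IH[of "u # vs"] snoc.prems by simp
  finally show ?case by simp
qed simp

lemma word_elem_perm:
  "mset xs = mset ys \<Longrightarrow> set ws \<subseteq> X \<Longrightarrow> set xs \<subseteq> X \<Longrightarrow> word_elem (ws @ xs) = word_elem (ws @ ys)"
proof (induction xs arbitrary: ws ys)
  case (Cons x xs)
  then have "x \<in> set ys" by (metis list.set_intros(1) set_mset_mset)
  then obtain us vs where ys: "ys = us @ x # vs" by (metis split_list)
  have "mset xs = mset (us @ vs)" using Cons.prems(1) ys by simp
  moreover have "set ys \<subseteq> X" using Cons.prems(1,3) by (metis set_mset_mset)
  ultimately show ?case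
    using Cons.IH[of "us @ vs" "ws @ [x]"] Cons.prems word_elem_move[of ws us x vs] ys by simp
qed simp

lemma word_elem_commute: "set xs \<subseteq> X \<Longrightarrow> set ys \<subseteq> X \<Longrightarrow> word_elem (xs @ ys) = word_elem (ys @ xs)"
  using word_elem_perm[of "xs @ ys" "ys @ xs" "[]"] by (simp add: union_commute)

lemma exists_word: "g \<in> carrier G \<Longrightarrow> \<exists>xs. set xs \<subseteq> X \<and> word_elem xs = g"
proof -
  let ?W = "word_elem ` {xs. set xs \<subseteq> X}"
  have W_carrier: "?W \<subseteq> carrier G" using word_elem_in_G by auto
  have W_one: "\<one>\<^bsub>G\<^esub> \<in> ?W" by (force intro: image_eqI[of _ _ "[]"])
  have W_mult: "a \<otimes>\<^bsub>G\<^esub> b \<in> ?W" if ab: "a \<in> ?W" "b \<in> ?W" for a b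
  proof -
    obtain xs ys where "set xs \<subseteq> X" "a = word_elem xs" "set ys \<subseteq> X" "b = word_elem ys"
      using ab by blast
    then show ?thesis
      using word_elem_append_map[of xs ys] map_apply_closed word_elem_in_G
      by (intro image_eqI[of _ _ "xs @ map (word_elem xs) ys"]) auto
  qed
  have W_sigma: "sigma x \<in> ?W" if "x \<in> X" for x
    using that word_elem_single by (force intro: image_eqI[of _ _ "[x]"])
  assume "g \<in> carrier G"
  then have "g \<in> generate (BijGroup X)
      (carrier (BijGroup X) \<inter> (\<lambda>x. restrict (ybe_sigma r x) X) ` X)"
    by (simp add: perm_group_def carrier_subgroup_generated)
  then have "g \<in> ?W"
  proof (induction rule: generate.induct)
    case one
    then show ?case using W_one by (simp add: perm_group_def)
  next
    case (incl h)
    then show ?case using W_sigma by (auto simp: sigma_def)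
  next
    case (inv h)
    then obtain x where x: "x \<in> X" "h = sigma x" by (auto simp: sigma_def)
    then have "inv\<^bsub>BijGroup X\<^esub> h = inv\<^bsub>G\<^esub> h"
      using group.inv_subgroup_generated[OF group_BijGroup sigma_in_G[OF x(1), unfolded perm_group_def]]
        x(2)
      by (simp add: perm_group_def)
    then show ?case
      using G.finite_submonoid_inv_closed[OF finite_carrier_G W_carrier W_one W_mult] W_sigma x
      by simp
  next
    case (eng h1 h2)
    then show ?case using W_mult by (simp add: perm_group_def)
  qed
  then show ?thesis by blast
qed

definition word_of :: "('a \<Rightarrow> 'a) \<Rightarrow> 'a list" where
  "word_of g = (SOME xs. set xs \<subseteq> X \<and> word_elem xs = g)"

lemma word_of: "g \<in> carrier G \<Longrightarrow> set (word_of g) \<subseteq> X \<and> word_elem (word_of g) = g"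
  unfolding word_of_def by (rule someI_ex[OF exists_word])

definition additive :: "('a \<Rightarrow> 'a) monoid" where
  "additive = \<lparr>carrier = carrier G,
     monoid.mult = \<lambda>g h. word_elem (word_of g @ word_of h),
     one = \<one>\<^bsub>G\<^esub>\<rparr>"

definition lam :: "('a \<Rightarrow> 'a) \<Rightarrow> ('a \<Rightarrow> 'a) \<Rightarrow> 'a \<Rightarrow> 'a" where
  "lam g h = word_elem (map g (word_of h))"

lemma word_elem_append_cong:
  assumes "set xs \<subseteq> X" "set xs' \<subseteq> X" "set ys \<subseteq> X" "word_elem xs = word_elem xs'"
  shows "word_elem (xs @ ys) = word_elem (xs' @ ys)"
  using word_elem_append[OF assms(1,3)] word_elem_append[OF assms(2,3)] assms(4) by simp

lemma add_word_elem:
  assumes xs: "set xs \<subseteq> X" and ys: "set ys \<subseteq> X"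
  shows "word_elem xs \<otimes>\<^bsub>additive\<^esub> word_elem ys = word_elem (xs @ ys)"
proof -
  have a: "set (word_of (word_elem xs)) \<subseteq> X" "word_elem (word_of (word_elem xs)) = word_elem xs"
    and b: "set (word_of (word_elem ys)) \<subseteq> X" "word_elem (word_of (word_elem ys)) = word_elem ys"
    using word_of word_elem_in_G xs ys by auto
  have "word_elem xs \<otimes>\<^bsub>additive\<^esub> word_elem ys = word_elem (xs @ word_of (word_elem ys))"
    using word_elem_append_cong[OF a(1) xs b(1) a(2)] by (simp add: additive_def)
  also have "\<dots> = word_elem (word_of (word_elem ys) @ xs)" using word_elem_commute b(1) xs by simp
  also have "\<dots> = word_elem (ys @ xs)" using word_elem_append_cong[OF b(1) ys xs b(2)] .
  also have "\<dots> = word_elem (xs @ ys)" using word_elem_commute xs ys by simp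
  finally show ?thesis .
qed

lemma mult_eq_add_word_elem:
  assumes g: "g \<in> carrier G" and ys: "set ys \<subseteq> X"
  shows "g \<otimes>\<^bsub>G\<^esub> word_elem ys = g \<otimes>\<^bsub>additive\<^esub> word_elem (map g ys)"
  using word_elem_append_map[of "word_of g" ys] add_word_elem[of "word_of g" "map g ys"]
    word_of[OF g] map_apply_closed[OF g ys] ys by simp

lemma lam_closed: "g \<in> carrier G \<Longrightarrow> h \<in> carrier G \<Longrightarrow> lam g h \<in> carrier G"
  unfolding lam_def using word_of map_apply_closed word_elem_in_G by simp

lemma mult_eq_add_lam: "g \<in> carrier G \<Longrightarrow> h \<in> carrier G \<Longrightarrow> g \<otimes>\<^bsub>G\<^esub> h = g \<otimes>\<^bsub>additive\<^esub> lam g h"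
  using mult_eq_add_word_elem[of g "word_of h"] word_of[of h] by (simp add: lam_def)

lemma comm_group_additive: "comm_group additive"
proof (rule comm_groupI)
  fix x y z assume "x \<in> carrier additive" "y \<in> carrier additive" "z \<in> carrier additive"
  then obtain xs ys zs where w: "set xs \<subseteq> X" "set ys \<subseteq> X" "set zs \<subseteq> X"
    and xyz: "x = word_elem xs" "y = word_elem ys" "z = word_elem zs"
    using word_of by (metis additive_def partial_object.select_convs(1))
  show "x \<otimes>\<^bsub>additive\<^esub> y \<in> carrier additive"
    using w xyz add_word_elem word_elem_in_G by (simp add: additive_def)
  show "x \<otimes>\<^bsub>additive\<^esub> y \<otimes>\<^bsub>additive\<^esub> z = x \<otimes>\<^bsub>additive\<^esub> (y \<otimes>\<^bsub>additive\<^esub> z)"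
    using w xyz add_word_elem by simp
  show "x \<otimes>\<^bsub>additive\<^esub> y = y \<otimes>\<^bsub>additive\<^esub> x"
    using w xyz add_word_elem word_elem_commute by simp
next
  show "\<one>\<^bsub>additive\<^esub> \<in> carrier additive" by (simp add: additive_def)
next
  fix x assume "x \<in> carrier additive"
  then have x: "x \<in> carrier G" by (simp add: additive_def)
  show "\<one>\<^bsub>additive\<^esub> \<otimes>\<^bsub>additive\<^esub> x = x"
    using add_word_elem[of "[]" "word_of x"] word_of[OF x] by (simp add: additive_def)
  have inv: "lam x (inv\<^bsub>G\<^esub> x) \<in> carrier G" using lam_closed x by simp
  have "x \<otimes>\<^bsub>additive\<^esub> lam x (inv\<^bsub>G\<^esub> x) = \<one>\<^bsub>additive\<^esub>"
    using mult_eq_add_lam[of x "inv\<^bsub>G\<^esub> x"] x by (simp add: additive_def)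
  moreover have "x \<otimes>\<^bsub>additive\<^esub> lam x (inv\<^bsub>G\<^esub> x) = lam x (inv\<^bsub>G\<^esub> x) \<otimes>\<^bsub>additive\<^esub> x"
    using word_of[OF x] word_of[OF inv] add_word_elem word_elem_commute by metis
  ultimately show "\<exists>y\<in>carrier additive. y \<otimes>\<^bsub>additive\<^esub> x = \<one>\<^bsub>additive\<^esub>"
    using inv by (auto simp: additive_def)
qed

lemma lam_word_elem:
  assumes g: "g \<in> carrier G" and ys: "set ys \<subseteq> X"
  shows "lam g (word_elem ys) = word_elem (map g ys)"
proof -
  interpret additive: comm_group additive by (rule comm_group_additive)
  have "g \<otimes>\<^bsub>additive\<^esub> lam g (word_elem ys) = g \<otimes>\<^bsub>additive\<^esub> word_elem (map g ys)"
    using mult_eq_add_lam[OF g word_elem_in_G[OF ys]] mult_eq_add_word_elem[OF g ys] by simp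
  then show ?thesis
    using additive.Units_l_cancel g lam_closed word_elem_in_G[OF ys]
      word_elem_in_G[OF map_apply_closed[OF g ys]]
    by (simp add: additive_def additive.Units_eq[unfolded additive_def, simplified])
qed

lemma lam_add:
  assumes g: "g \<in> carrier G" and h: "h \<in> carrier G" and k: "k \<in> carrier G"
  shows "lam g (h \<otimes>\<^bsub>additive\<^esub> k) = lam g h \<otimes>\<^bsub>additive\<^esub> lam g k"
proof -
  have "h \<otimes>\<^bsub>additive\<^esub> k = word_elem (word_of h @ word_of k)" by (simp add: additive_def)
  then show ?thesis
    using word_of[OF h] word_of[OF k] lam_word_elem[OF g] add_word_elem map_apply_closed[OF g]
    by (simp add: lam_def)
qed

lemma left_brace: "left_brace G additive lam"
  by (intro left_brace.intro group_G comm_group_additive lam_closed lam_add mult_eq_add_lam)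
    (simp_all add: additive_def)

lemma lam_sigma: "g \<in> carrier G \<Longrightarrow> x \<in> X \<Longrightarrow> lam g (sigma x) = sigma (g x)"
  using lam_word_elem[of g "[x]"] word_elem_single apply_closed by simp

lemma retractable_if_lam_trivial:
  assumes c: "c \<in> carrier G" "c \<noteq> \<one>\<^bsub>G\<^esub>" and trivial: "\<And>g. g \<in> carrier G \<Longrightarrow> lam c g = g"
  shows "\<exists>x\<in>X. \<exists>y\<in>X. x \<noteq> y \<and> (\<forall>z\<in>X. ybe_sigma r x z = ybe_sigma r y z)"
proof -
  obtain x where x: "x \<in> X" "c x \<noteq> x"
    using G_eqI[OF c(1) G.one_closed] c(2) apply_one by auto
  have "sigma (c x) = sigma x"
    using lam_sigma[OF c(1) x(1)] trivial[OF sigma_in_G[OF x(1)]] by simp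
  then have "\<forall>z\<in>X. ybe_sigma r (c x) z = ybe_sigma r x z"
    by (metis sigma_def restrict_apply')
  then show ?thesis using x apply_closed[OF c(1) x(1)] by blast
qed

end

theorem lemma3p5:
  fixes X :: "'a set" and r :: "'a \<times> 'a \<Rightarrow> 'a \<times> 'a" and p :: nat
  assumes "finite X"
    and "ybe_solution X r"
    and "prime p"
    and "p dvd order (perm_group X r)"
    and "\<exists>P. sylow_subgroup (perm_group X r) p P \<and> P \<lhd> perm_group X r
             \<and> (\<forall>a\<in>P. \<forall>b\<in>P. a \<otimes>\<^bsub>perm_group X r\<^esub> b = b \<otimes>\<^bsub>perm_group X r\<^esub> a)"
  shows "\<exists>x\<in>X. \<exists>y\<in>X. x \<noteq> y \<and> (\<forall>z\<in>X. ybe_sigma r x z = ybe_sigma r y z)"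
proof -
  interpret finite_solution X r using assms(1,2) by (rule finite_solution.intro)
  obtain P where sylow: "sylow_subgroup G p P" and normal: "P \<lhd> G"
    and abelian: "\<forall>a\<in>P. \<forall>b\<in>P. a \<otimes>\<^bsub>G\<^esub> b = b \<otimes>\<^bsub>G\<^esub> a"
    using assms(5) by blast
  define k where "k = multiplicity p (order G)"
  define m where "m = order G div p ^ k"
  have "order G > 0" using finite_carrier_G G.order_gt_0_iff_finite by blast
  then have "order G = p ^ k * m" "coprime p m" "k > 0"
    using prime_power_part[OF assms(3,4)] by (simp_all add: k_def m_def)
  moreover have "card P = p ^ k" using sylow by (simp add: sylow_subgroup_def k_def)
  ultimately interpret brace: left_brace_normal_sylow G additive lam p k m P
    using left_brace finite_carrier_G assms(3) normal abelian
    by (simp add: left_brace_normal_sylow_def left_brace_normal_sylow_axioms_def)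
  obtain c where "c \<in> P" "c \<noteq> \<one>\<^bsub>G\<^esub>" "\<forall>g\<in>carrier G. lam c g = g"
    using brace.socle_meets_P by blast
  then show ?thesis using retractable_if_lam_trivial brace.P_carrier by blast
qed

end
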